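(* Let $p$ be an odd prime, let $d>1$ be an integer, and let $q$ be an even power of $p$ with $q \equiv 1 \pmod{2d}$. Then the clique number of the generalized Paley graph $GP(q,d)$ satisfies $\omega\big(GP(q,d)\big)=\sqrt{q}$ if and only if $d \mid (\sqrt{q}+1)$. In particular, if $d \nmid (\sqrt{q}+1)$, then $\omega\big(GP(q,d)\big) \leq \sqrt{q}-1$.
   Context: For a prime power $q$ and an integer $d>1$ with $d \mid q-1$, the $d$-Paley graph $GP(q,d)$ is the graph with vertex set $\mathbb{F}_q$ in which two distinct vertices $x,y$ are adjacent if and only if $x-y$ is a $d$-th power in $\mathbb{F}_q^*$. $\omega(X)$ denotes the clique number (size of a largest clique) of a graph $X$. *)

theory Defs
  imports "HOL-Number_Theory.Number_Theory"
begin

definition dth_powers :: "nat \<Rightarrow> 'a::{field,finite} set" where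
  "dth_powers d = {y. \<exists>x. x \<noteq> 0 \<and> y = x ^ d}"

definition paley_adj :: "nat \<Rightarrow> 'a::{field,finite} \<Rightarrow> 'a \<Rightarrow> bool" where
  "paley_adj d x y \<longleftrightarrow> x \<noteq> y \<and> x - y \<in> dth_powers d"

definition paley_clique :: "nat \<Rightarrow> 'a::{field,finite} set \<Rightarrow> bool" where
  "paley_clique d C \<longleftrightarrow> (\<forall>x\<in>C. \<forall>y\<in>C. x \<noteq> y \<longrightarrow> paley_adj d x y)"

definition paley_clique_number :: "'a::{field,finite} itself \<Rightarrow> nat \<Rightarrow> nat" where
  "paley_clique_number TYPE('a) d = Max {card C | C :: 'a set. paley_clique d C}"

end

theory Submission
  imports Defs "HOL-Library.Cardinality" "HOL-Computational_Algebra.Polynomial"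
begin

text \<open>
  Write \<open>q = r\<^sup>2\<close> and let \<open>D\<close> be the set of nonzero \<open>d\<close>-th powers. Since \<open>x ^ n = c\<close> has at most
  \<open>n\<close> roots, counting shows that \<open>D\<close> is exactly the set of roots of \<open>x ^ ((q - 1) / d) = 1\<close> and has
  \<open>(q - 1)/d\<close> elements (Euler's criterion, without a primitive root).

  For a non-\<open>d\<close>-th power \<open>t\<close> the map \<open>(a, b) \<mapsto> a + t b\<close> is injective on \<open>C \<times> C\<close> for every
  clique \<open>C\<close>, so \<open>\<omega> \<le> r\<close>. If \<open>d\<close> divides \<open>r + 1\<close>, the subfield \<open>{z. z ^ r = z}\<close> is a clique of
  size \<open>r\<close>: a nonzero difference \<open>z\<close> of two of its elements satisfies \<open>z ^ (r - 1) = 1\<close>, hence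
  \<open>z ^ ((q - 1) / d) = 1\<close>.

  Conversely, let \<open>A\<close> be a clique of size \<open>r\<close>. For \<open>x \<notin> A\<close> let \<open>v(x)\<close> be the number of
  neighbours of \<open>x\<close> in \<open>A\<close> and \<open>T(x)\<close> the number of pairs \<open>(a, b) \<in> A \<times> A\<close> with \<open>x - a\<close> and
  \<open>x - b\<close> in the same coset of \<open>D\<close>. Double counting gives \<open>\<Sum> v\<close> and \<open>\<Sum> T\<close> over \<open>x \<notin> A\<close>, and
  Cauchy-Schwarz over the \<open>d - 1\<close> cosets other than \<open>D\<close> gives
  \<open>(d - 1) T \<ge> (d - 1) v\<^sup>2 + (r - v)\<^sup>2\<close>. These force \<open>d v(x) = r + 1 - d\<close> for every \<open>x \<notin> A\<close>, so
  \<open>d\<close> divides \<open>r + 1\<close>.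
\<close>

section \<open>Powers in a finite field\<close>

lemma finite_field_power_card_minus_one:
  fixes x :: "'a::{field,finite}"
  assumes "x \<noteq> 0"
  shows "x ^ (CARD('a) - 1) = 1"
proof -
  have "x ^ (CARD('a) - 1) * \<Prod>(UNIV - {0::'a}) = (\<Prod>y\<in>UNIV - {0}. x * y)"
    by (simp add: prod.distrib card_Diff_singleton)
  also have "\<dots> = \<Prod>(UNIV - {0::'a})"
    by (rule prod.reindex_bij_witness[of _ "\<lambda>y. y / x" "\<lambda>y. x * y"]) (use assms in auto)
  finally show ?thesis
    by (simp add: prod_zero_iff)
qed

lemma finite_field_card_ge_2: "CARD('a::{field,finite}) \<ge> 2"
  using card_mono[of "UNIV :: 'a set" "{0, 1}"] by simp

lemma card_power_eq_le:
  fixes c :: "'a::idom"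
  assumes "n > 0"
  shows "card {x. x ^ n = c} \<le> n"
proof -
  define p where "p = monom 1 n + [:- c:]"
  have "degree p = n"
    using assms by (simp add: p_def degree_add_eq_left degree_monom_eq)
  with assms have "p \<noteq> 0"
    by auto
  have "{x. x ^ n = c} = {x. poly p x = 0}"
    by (simp add: p_def poly_monom)
  with card_poly_roots_bound[OF \<open>p \<noteq> 0\<close>] \<open>degree p = n\<close> show ?thesis
    by simp
qed

lemma card_nonzero_le_card_dth_powers:
  assumes "m > 0"
  shows "CARD('a::{field,finite}) - 1 \<le> m * card (dth_powers m :: 'a set)"
proof -
  have "UNIV - {0::'a} = (\<Union>c\<in>dth_powers m. {y. y ^ m = c})"
    using assms by (force simp: dth_powers_def zero_power)
  then have "CARD('a) - 1 = card (\<Union>c\<in>dth_powers m. {y::'a. y ^ m = c})"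
    by (metis card_Diff_singleton finite UNIV_I)
  also have "\<dots> \<le> (\<Sum>c\<in>dth_powers m. card {y::'a. y ^ m = c})"
    by (rule card_UN_le) simp
  also have "\<dots> \<le> (\<Sum>c\<in>(dth_powers m :: 'a set). m)"
    by (intro sum_mono card_power_eq_le assms)
  finally show ?thesis
    by (simp add: mult.commute)
qed

lemma dth_powers_eq_roots_of_unity:
  assumes "m dvd CARD('a::{field,finite}) - 1"
  shows "dth_powers m = {x::'a. x ^ ((CARD('a) - 1) div m) = 1}"
    and "card (dth_powers m :: 'a set) = (CARD('a) - 1) div m"
proof -
  obtain e where N: "CARD('a) - 1 = m * e"
    using assms by blast
  with finite_field_card_ge_2[where 'a='a] have "m > 0" "e > 0"
    by (auto intro!: gr0I)
  have e: "(CARD('a) - 1) div m = e"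
    using N \<open>m > 0\<close> by simp
  have powers_subset: "dth_powers m \<subseteq> {x::'a. x ^ e = 1}"
  proof
    fix x :: 'a
    assume "x \<in> dth_powers m"
    then obtain y where "y \<noteq> 0" "x = y ^ m"
      by (auto simp: dth_powers_def)
    then show "x \<in> {x. x ^ e = 1}"
      using finite_field_power_card_minus_one[OF \<open>y \<noteq> 0\<close>] unfolding N
      by (simp add: power_mult)
  qed
  have "m * e \<le> m * card (dth_powers m :: 'a set)"
    using card_nonzero_le_card_dth_powers[OF \<open>m > 0\<close>, where 'a='a] N by simp
  then have "e \<le> card (dth_powers m :: 'a set)"
    using \<open>m > 0\<close> by simp
  moreover have "card (dth_powers m :: 'a set) \<le> card {x::'a. x ^ e = 1}"
    using powers_subset by (rule card_mono[rotated]) simp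
  moreover have "card {x::'a. x ^ e = 1} \<le> e"
    using card_power_eq_le[OF \<open>e > 0\<close>] .
  ultimately have card_eq: "card (dth_powers m :: 'a set) = e" "card {x::'a. x ^ e = 1} = e"
    by linarith+
  show "dth_powers m = {x::'a. x ^ ((CARD('a) - 1) div m) = 1}"
    unfolding e using powers_subset card_eq by (intro card_subset_eq) simp_all
  show "card (dth_powers m :: 'a set) = (CARD('a) - 1) div m"
    unfolding e by (fact card_eq)
qed

lemma zero_notin_dth_powers: "(0::'a::{field,finite}) \<notin> dth_powers d"
  by (auto simp: dth_powers_def)

lemma one_in_dth_powers: "(1::'a::{field,finite}) \<in> dth_powers d"
  unfolding dth_powers_def by (intro CollectI exI[of _ 1]) simp

lemma divide_in_dth_powers:
  fixes u v :: "'a::{field,finite}"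
  assumes "u \<in> dth_powers d" "v \<in> dth_powers d"
  shows "u / v \<in> dth_powers d"
proof -
  obtain a b :: 'a where "a \<noteq> 0" "b \<noteq> 0" "u = a ^ d" "v = b ^ d"
    using assms by (auto simp: dth_powers_def)
  then show ?thesis
    unfolding dth_powers_def by (intro CollectI exI[of _ "a / b"]) (simp add: power_divide)
qed

lemma divide_in_dth_powers_iff:
  fixes u v :: "'a::{field,finite}"
  assumes "d dvd CARD('a) - 1" "u \<noteq> 0" "v \<noteq> 0"
  shows "u / v \<in> dth_powers d \<longleftrightarrow> u ^ ((CARD('a) - 1) div d) = v ^ ((CARD('a) - 1) div d)"
  using assms by (simp add: dth_powers_eq_roots_of_unity(1)[OF assms(1)] power_divide)

section \<open>Cliques and the clique number\<close>

lemma paley_clique_diff_in_dth_powers: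
  "paley_clique d C \<Longrightarrow> x \<in> C \<Longrightarrow> y \<in> C \<Longrightarrow> x \<noteq> y \<Longrightarrow> x - y \<in> dth_powers d"
  by (auto simp: paley_clique_def paley_adj_def)

lemma paley_clique_number_eq_iff:
  assumes bound: "\<And>C::'a::{field,finite} set. paley_clique d C \<Longrightarrow> card C \<le> m"
  shows "paley_clique_number TYPE('a) d \<le> m"
    and "paley_clique_number TYPE('a) d = m \<longleftrightarrow> (\<exists>C::'a set. paley_clique d C \<and> card C = m)"
proof -
  define S where "S = {card C | C :: 'a set. paley_clique d C}"
  have "finite S"
    by (rule finite_subset[of _ "{..CARD('a)}"]) (auto simp: S_def card_mono)
  moreover have "S \<noteq> {}"
    using paley_clique_def[of d "{} :: 'a set"] by (auto simp: S_def)
  ultimately have "Max S \<in> S"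
    by (rule Max_in)
  moreover have le: "\<forall>c\<in>S. c \<le> m"
    using bound by (auto simp: S_def)
  ultimately have "Max S \<le> m" and "Max S = m \<longleftrightarrow> m \<in> S"
    using Max_ge[OF \<open>finite S\<close>, of m] by auto
  then show "paley_clique_number TYPE('a) d \<le> m"
    and "paley_clique_number TYPE('a) d = m \<longleftrightarrow> (\<exists>C::'a set. paley_clique d C \<and> card C = m)"
    unfolding paley_clique_number_def S_def by auto
qed

lemma paley_clique_card_square_le:
  fixes C :: "'a::{field,finite} set"
  assumes "d > 1" and "d dvd CARD('a) - 1" and C: "paley_clique d C"
  shows "card C * card C \<le> CARD('a)"
proof -
  obtain t :: 'a where "t \<noteq> 0" and t: "t \<notin> dth_powers d"
  proof -
    have "(CARD('a) - 1) div d < CARD('a) - 1"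
      using finite_field_card_ge_2[where 'a='a] \<open>d > 1\<close> by simp
    then have "card (dth_powers d :: 'a set) < card (UNIV - {0::'a})"
      using dth_powers_eq_roots_of_unity(2)[OF assms(2)] by (simp add: card_Diff_singleton)
    then have "\<not> UNIV - {0::'a} \<subseteq> dth_powers d"
      by (meson card_mono finite leD)
    then show ?thesis
      using that by blast
  qed
  have "inj_on (\<lambda>(a, b). a + t * b) (C \<times> C)"
  proof (rule inj_onI, clarify)
    fix a b a' b'
    assume in_C: "a \<in> C" "b \<in> C" "a' \<in> C" "b' \<in> C" and eq: "a + t * b = a' + t * b'"
    show "a = a' \<and> b = b'"
    proof (cases "b = b'")
      case False
      then have "b' - b \<noteq> 0"
        by simp
      moreover have "a - a' = t * (b' - b)"
        using eq by (simp add: algebra_simps)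
      ultimately have "a \<noteq> a'" and "t = (a - a') / (b' - b)"
        using \<open>t \<noteq> 0\<close> by (auto simp: field_simps)
      then have "t \<in> dth_powers d"
        using in_C False by (simp add: divide_in_dth_powers paley_clique_diff_in_dth_powers[OF C])
      with t show ?thesis ..
    qed (use eq in simp)
  qed
  then have "card (C \<times> C) \<le> CARD('a)"
    by (rule card_inj_on_le) simp_all
  then show ?thesis
    by (simp add: card_cartesian_product)
qed

section \<open>The subfield clique\<close>

lemma power_prime_power_diff:
  fixes x y :: "'a::{field,finite}"
  assumes "prime p" and "odd p" and "CARD('a) = p ^ n"
  shows "(x - y) ^ (p ^ k) = x ^ (p ^ k) - y ^ (p ^ k)"
proof -
  have "prime CHAR('a)"
    by (simp add: finite_imp_CHAR_pos prime_CHAR_semidom)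
  moreover have "CHAR('a) dvd p"
    using CHAR_dvd_CARD[where 'a='a] assms(3) \<open>prime CHAR('a)\<close> prime_dvd_power by metis
  ultimately have "CHAR('a) = p"
    using \<open>prime p\<close> primes_dvd_imp_eq by blast
  with \<open>prime p\<close> have "(x + - y) ^ (p ^ k) = x ^ (p ^ k) + (- y) ^ (p ^ k)"
    by (intro freshmans_dream') simp_all
  with \<open>odd p\<close> show ?thesis
    by simp
qed

lemma power_fixed_points_eq:
  fixes r :: nat
  assumes "r > 0"
  shows "{z::'a::idom. z ^ r = z} = insert 0 {z. z ^ (r - 1) = 1}"
proof -
  have "z ^ r = z * z ^ (r - 1)" for z :: 'a
    using assms by (simp flip: power_Suc)
  then show ?thesis
    by auto
qed

lemma power_fixed_point_in_dth_powers:
  fixes z :: "'a::{field,finite}"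
  assumes card: "CARD('a) = r * r" and "r > 1" and "d dvd r + 1" and "z \<noteq> 0" "z ^ r = z"
  shows "z \<in> dth_powers d"
proof -
  obtain e where e: "r + 1 = d * e"
    using \<open>d dvd r + 1\<close> by blast
  then have "d \<noteq> 0"
    by (metis mult_0 add_is_0 one_neq_zero)
  have "CARD('a) - 1 = (r + 1) * (r - 1)"
    using card \<open>r > 1\<close> by (simp add: algebra_simps diff_mult_distrib2)
  also have "\<dots> = d * ((r - 1) * e)"
    unfolding e by (simp add: ac_simps)
  finally have N: "CARD('a) - 1 = d * ((r - 1) * e)" .
  have "z ^ (r - 1) = 1"
    using assms(4,5) power_fixed_points_eq[of r, where 'a='a] \<open>r > 1\<close> by auto
  then have "z ^ ((CARD('a) - 1) div d) = 1"
    unfolding N using \<open>d \<noteq> 0\<close> by (simp add: power_mult)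
  moreover have "d dvd CARD('a) - 1"
    unfolding N by (rule dvd_triv_left)
  ultimately show ?thesis
    using dth_powers_eq_roots_of_unity(1) by blast
qed

lemma paley_clique_subfield:
  fixes r :: nat
  assumes card: "CARD('a::{field,finite}) = r * r" and "r > 1" and "d dvd r + 1"
    and frobenius: "\<And>x y::'a. (x - y) ^ r = x ^ r - y ^ r"
  shows "paley_clique d {z::'a. z ^ r = z}" and "card {z::'a. z ^ r = z} = r"
proof -
  have N: "CARD('a) - 1 = (r + 1) * (r - 1)"
    using card \<open>r > 1\<close> by (simp add: algebra_simps diff_mult_distrib2)
  have "(r + 1) dvd CARD('a) - 1"
    unfolding N by (rule dvd_triv_left)
  moreover have "(CARD('a) - 1) div (r + 1) = r - 1"
    unfolding N by (rule nonzero_mult_div_cancel_left) simp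
  ultimately have "card (dth_powers (r + 1) :: 'a set) = r - 1"
    and "dth_powers (r + 1) = {z::'a. z ^ (r - 1) = 1}"
    using dth_powers_eq_roots_of_unity[of "r + 1", where 'a='a] by simp_all
  moreover have "(0::'a) \<notin> {z. z ^ (r - 1) = 1}"
    using \<open>r > 1\<close> by (simp add: zero_power)
  ultimately show "card {z::'a. z ^ r = z} = r"
    using power_fixed_points_eq[of r, where 'a='a] \<open>r > 1\<close> by simp
  show "paley_clique d {z::'a. z ^ r = z}"
    using power_fixed_point_in_dth_powers[OF assms(1-3)] frobenius
    by (auto simp: paley_clique_def paley_adj_def)
qed

section \<open>Cliques of size \<open>\<surd>q\<close>\<close>

definition adj_count :: "'a::ab_group_add set \<Rightarrow> 'a set \<Rightarrow> 'a \<Rightarrow> nat" where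
  "adj_count D A x = card {a \<in> A. x - a \<in> D}"

text \<open>For \<open>D\<close> the \<open>d\<close>-th powers, the pair \<open>(a, b)\<close> counts iff \<open>x - a\<close> and \<open>x - b\<close> lie in the
  same coset of \<open>D\<close>.\<close>
definition ratio_count :: "'a::field set \<Rightarrow> 'a set \<Rightarrow> 'a \<Rightarrow> nat" where
  "ratio_count D A x = card {(a, b) \<in> A \<times> A. (x - a) / (x - b) \<in> D}"

lemma sum_adj_count:
  fixes A D :: "'a::{ab_group_add,finite} set"
  shows "(\<Sum>x\<in>UNIV. adj_count D A x) = card D * card A"
  unfolding adj_count_def
proof (rule sum_multicount)
  have "card {x \<in> UNIV. x - a \<in> D} = card D" for a
  proof -
    have "{x \<in> UNIV. x - a \<in> D} = (\<lambda>y. y + a) ` D"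
      by force
    then show ?thesis
      by (simp add: card_image)
  qed
  then show "\<forall>a\<in>A. card {x \<in> UNIV. x - a \<in> D} = card D" ..
qed simp_all

lemma card_ratio_preimage:
  fixes a b :: "'a::{field,finite}"
  assumes "a \<noteq> b" and "0 \<notin> D"
  shows "card {x. (x - a) / (x - b) \<in> D} = card (D - {1})"
proof -
  \<comment> \<open>\<open>x = b\<close> never counts, since \<open>f b = 0\<close> by \<open>x / 0 = 0\<close>.\<close>
  define f where "f x = (x - a) / (x - b)" for x
  define g where "g y = (a - b * y) / (1 - y)" for y
  have "bij_betw f {x. f x \<in> D} (D - {1})"
  proof (rule bij_betw_byWitness[where f' = g])
    have "x \<noteq> b" and "f x \<noteq> 1" if "f x \<in> D" for x
      using that assms by (auto simp: f_def)
    moreover have "g (f x) = x" if "x \<noteq> b" for x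
    proof -
      have "1 - f x = (a - b) / (x - b)" and "a - b * f x = x * (a - b) / (x - b)"
        using that by (simp_all add: f_def field_simps)
      then show ?thesis
        using that assms(1) by (simp add: g_def)
    qed
    ultimately show "\<forall>x\<in>{x. f x \<in> D}. g (f x) = x" and "f ` {x. f x \<in> D} \<subseteq> D - {1}"
      by auto
    have "f (g y) = y" if "y \<noteq> 1" for y
    proof -
      have "g y - a = y * (a - b) / (1 - y)" and "g y - b = (a - b) / (1 - y)"
        using that by (simp_all add: g_def field_simps)
      then show ?thesis
        using that assms(1) by (simp add: f_def)
    qed
    then show "\<forall>y\<in>D - {1}. f (g y) = y" and "g ` (D - {1}) \<subseteq> {x. f x \<in> D}"
      by auto
  qed
  then show ?thesis
    unfolding f_def by (rule bij_betw_same_card)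
qed

lemma sum_ratio_count:
  fixes A D :: "'a::{field,finite} set"
  assumes "0 \<notin> D" and "1 \<in> D"
  shows "(\<Sum>x\<in>UNIV. ratio_count D A x)
    = card A * (CARD('a) - 1 + (card A - 1) * (card D - 1))"
proof -
  define k where "k a b = (if a = b then CARD('a) - 1 else card D - 1)" for a b :: 'a
  have "card {x \<in> UNIV. (x - fst p) / (x - snd p) \<in> D} = k (fst p) (snd p)" for p :: "'a \<times> 'a"
  proof (cases "fst p = snd p")
    case True
    then have "{x \<in> UNIV. (x - fst p) / (x - snd p) \<in> D} = UNIV - {fst p}"
      using assms by auto
    with True show ?thesis
      by (simp add: k_def card_Diff_singleton)
  next
    case False
    then show ?thesis
      using card_ratio_preimage[OF False \<open>0 \<notin> D\<close>] assms by (simp add: k_def card_Diff_singleton)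
  qed
  moreover have "ratio_count D A x = card {p \<in> A \<times> A. (x - fst p) / (x - snd p) \<in> D}" for x
    unfolding ratio_count_def by (rule arg_cong[where f = card]) auto
  ultimately have "(\<Sum>x\<in>UNIV. ratio_count D A x) = (\<Sum>p\<in>A \<times> A. k (fst p) (snd p))"
    by (simp only:) (intro sum_multicount_gen; simp)
  also have "\<dots> = (\<Sum>a\<in>A. \<Sum>b\<in>A. k a b)"
    by (simp add: sum.cartesian_product case_prod_beta)
  also have "\<dots> = (\<Sum>a\<in>A. CARD('a) - 1 + (card A - 1) * (card D - 1))"
  proof (rule sum.cong[OF refl])
    fix a
    assume "a \<in> A"
    then have "(\<Sum>b\<in>A. k a b) = k a a + (\<Sum>b\<in>A - {a}. k a b)"
      by (simp add: sum.remove)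
    also have "(\<Sum>b\<in>A - {a}. k a b) = (\<Sum>b\<in>A - {a}. card D - 1)"
      by (rule sum.cong) (auto simp: k_def)
    finally show "(\<Sum>b\<in>A. k a b) = CARD('a) - 1 + (card A - 1) * (card D - 1)"
      using \<open>a \<in> A\<close> by (simp add: k_def)
  qed
  finally show ?thesis
    by simp
qed

lemma adj_count_clique_member:
  assumes "paley_clique d A" and "x \<in> A"
  shows "adj_count (dth_powers d) A (x::'a::{field,finite}) = card A - 1"
proof -
  have "{a \<in> A. x - a \<in> dth_powers d} = A - {x}"
    using assms zero_notin_dth_powers paley_clique_diff_in_dth_powers by fastforce
  then show ?thesis
    using assms by (simp add: adj_count_def)
qed

lemma ratio_count_clique_member:
  assumes "paley_clique d A" and "x \<in> A"
  shows "ratio_count (dth_powers d) A (x::'a::{field,finite}) = (card A - 1) ^ 2"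
proof -
  have "{(a, b) \<in> A \<times> A. (x - a) / (x - b) \<in> dth_powers d} = (A - {x}) \<times> (A - {x})"
    using assms zero_notin_dth_powers paley_clique_diff_in_dth_powers divide_in_dth_powers
    by fastforce
  then show ?thesis
    using assms by (simp add: ratio_count_def card_cartesian_product power2_eq_square)
qed

lemma sum_adj_count_outside_clique:
  fixes A :: "'a::{field,finite} set"
  assumes "paley_clique d A"
  shows "(\<Sum>x\<in>UNIV - A. adj_count (dth_powers d) A x) + card A * (card A - 1)
    = card (dth_powers d :: 'a set) * card A"
proof -
  have "(\<Sum>x\<in>UNIV. adj_count (dth_powers d) A x)
      = (\<Sum>x\<in>UNIV - A. adj_count (dth_powers d) A x) + (\<Sum>x\<in>A. adj_count (dth_powers d) A x)"
    by (rule sum.subset_diff) simp_all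
  then show ?thesis
    using sum_adj_count[of "dth_powers d" A] adj_count_clique_member[OF assms] by simp
qed

lemma sum_ratio_count_outside_clique:
  fixes A :: "'a::{field,finite} set"
  assumes "paley_clique d A"
  shows "(\<Sum>x\<in>UNIV - A. ratio_count (dth_powers d) A x) + card A * (card A - 1)\<^sup>2
    = card A * (CARD('a) - 1 + (card A - 1) * (card (dth_powers d :: 'a set) - 1))"
proof -
  have "(\<Sum>x\<in>UNIV. ratio_count (dth_powers d) A x) = (\<Sum>x\<in>UNIV - A. ratio_count (dth_powers d) A x)
      + (\<Sum>x\<in>A. ratio_count (dth_powers d) A x)"
    by (rule sum.subset_diff) simp_all
  then show ?thesis
    using sum_ratio_count[OF zero_notin_dth_powers one_in_dth_powers, of d A]
      ratio_count_clique_member[OF assms] by simp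
qed

lemma square_sum_le_card_mult_sum_squares:
  fixes f :: "'b \<Rightarrow> 'c::linordered_idom"
  shows "(\<Sum>i\<in>I. f i)\<^sup>2 \<le> of_nat (card I) * (\<Sum>i\<in>I. (f i)\<^sup>2)"
proof -
  have "0 \<le> (\<Sum>i\<in>I. \<Sum>j\<in>I. (f i - f j)\<^sup>2)"
    by (intro sum_nonneg) simp
  also have "\<dots> = 2 * of_nat (card I) * (\<Sum>i\<in>I. (f i)\<^sup>2) - 2 * (\<Sum>i\<in>I. f i)\<^sup>2"
    by (simp add: power2_diff sum.distrib sum_subtractf sum_distrib_left sum_distrib_right
        power2_eq_square algebra_simps)
  finally show ?thesis
    by simp
qed

lemma card_eq_sum_card_fibres:
  assumes "finite W" and "f ` A \<subseteq> W" and "finite A"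
  shows "card A = (\<Sum>w\<in>W. card {a \<in> A. f a = w})"
  using sum.group[OF assms(3,1,2), of "\<lambda>_. 1::nat"] by simp

lemma card_equal_value_pairs:
  assumes "finite W" and "f ` A \<subseteq> W" and "finite A"
  shows "card {p \<in> A \<times> A. f (fst p) = f (snd p)} = (\<Sum>w\<in>W. (card {a \<in> A. f a = w})\<^sup>2)"
proof -
  let ?P = "{p \<in> A \<times> A. f (fst p) = f (snd p)}"
  have fibre: "{p \<in> ?P. f (fst p) = w} = {a \<in> A. f a = w} \<times> {a \<in> A. f a = w}" for w
    by auto
  have "(\<lambda>p. f (fst p)) ` ?P \<subseteq> W"
    using assms(2) by auto
  then have "card ?P = (\<Sum>w\<in>W. card {p \<in> ?P. f (fst p) = w})"
    using assms by (intro card_eq_sum_card_fibres) simp_all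
  also have "\<dots> = (\<Sum>w\<in>W. card ({a \<in> A. f a = w} \<times> {a \<in> A. f a = w}))"
    by (simp only: fibre)
  finally show ?thesis
    by (simp add: card_cartesian_product power2_eq_square)
qed

lemma ratio_count_lower_bound:
  fixes A :: "'a::{field,finite} set"
  assumes "d dvd CARD('a) - 1" and "x \<notin> A"
  defines "v \<equiv> int (adj_count (dth_powers d) A x)"
    and "t \<equiv> int (ratio_count (dth_powers d) A x)"
  shows "(int d - 1) * v\<^sup>2 + (int (card A) - v)\<^sup>2 \<le> (int d - 1) * t"
proof -
  define s where "s = (CARD('a) - 1) div d"
  \<comment> \<open>\<open>\<chi> a\<close> is a \<open>d\<close>-th root of unity recording the coset of \<open>x - a\<close>.\<close>
  define \<chi> where "\<chi> a = (x - a) ^ s" for a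
  define W where "W = {w::'a. w ^ d = 1}"
  define n where "n w = int (card {a \<in> A. \<chi> a = w})" for w
  have "d > 0"
    using assms(1) finite_field_card_ge_2[where 'a='a] by (auto intro: gr0I)
  have nonzero: "x - a \<noteq> 0" if "a \<in> A" for a
    using that assms(2) by auto
  have "\<chi> a ^ d = 1" if "a \<in> A" for a
  proof -
    have "\<chi> a ^ d = (x - a) ^ (CARD('a) - 1)"
      using assms(1) by (simp add: \<chi>_def s_def flip: power_mult)
    then show ?thesis
      using finite_field_power_card_minus_one[OF nonzero[OF that]] by simp
  qed
  then have "\<chi> ` A \<subseteq> W"
    by (auto simp: W_def)
  have "finite W" "1 \<in> W" "card W \<le> d"
    using card_power_eq_le[OF \<open>d > 0\<close>] by (simp_all add: W_def)
  have "n 1 = v"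
    unfolding n_def v_def adj_count_def \<chi>_def s_def
    by (simp add: dth_powers_eq_roots_of_unity(1)[OF assms(1)])
  have "int (card A) = n 1 + (\<Sum>w\<in>W - {1}. n w)"
    using card_eq_sum_card_fibres[OF \<open>finite W\<close> \<open>\<chi> ` A \<subseteq> W\<close>] \<open>finite W\<close> \<open>1 \<in> W\<close>
    by (simp add: n_def sum.remove flip: of_nat_sum)
  then have sum_n: "int (card A) - v = (\<Sum>w\<in>W - {1}. n w)"
    using \<open>n 1 = v\<close> by simp
  have "t = int (card {p \<in> A \<times> A. \<chi> (fst p) = \<chi> (snd p)})"
    unfolding t_def ratio_count_def \<chi>_def s_def
    using nonzero divide_in_dth_powers_iff[OF assms(1)]
    by (intro arg_cong[where f = "\<lambda>X. int (card X)"]) auto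
  also have "\<dots> = (n 1)\<^sup>2 + (\<Sum>w\<in>W - {1}. (n w)\<^sup>2)"
    using card_equal_value_pairs[OF \<open>finite W\<close> \<open>\<chi> ` A \<subseteq> W\<close>] \<open>finite W\<close> \<open>1 \<in> W\<close>
    by (simp add: n_def sum.remove)
  finally have sum_n2: "t - v\<^sup>2 = (\<Sum>w\<in>W - {1}. (n w)\<^sup>2)"
    using \<open>n 1 = v\<close> by simp
  have "(int (card A) - v)\<^sup>2 \<le> int (card (W - {1})) * (\<Sum>w\<in>W - {1}. (n w)\<^sup>2)"
    unfolding sum_n by (rule square_sum_le_card_mult_sum_squares)
  also have "\<dots> \<le> (int d - 1) * (\<Sum>w\<in>W - {1}. (n w)\<^sup>2)"
  proof (rule mult_right_mono)
    show "int (card (W - {1})) \<le> int d - 1"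
      using \<open>card W \<le> d\<close> \<open>d > 0\<close> \<open>1 \<in> W\<close> \<open>finite W\<close>
      by (simp add: card_Diff_singleton)
  qed (simp add: sum_nonneg)
  finally show ?thesis
    unfolding sum_n2[symmetric] by (simp add: algebra_simps)
qed

lemma moment_bounds_force_constant:
  fixes v t :: "'x \<Rightarrow> int" and r d s :: int
  assumes "finite U" and card_U: "int (card U) = r * r - r" and sd: "s * d = r * r - 1"
    and "d \<ge> 0"
    and sum_v: "(\<Sum>x\<in>U. v x) = r * s - r * (r - 1)"
    and sum_t: "(\<Sum>x\<in>U. t x) = r * (r * r - 1 + (r - 1) * (s - 1)) - r * (r - 1)\<^sup>2"
    and bound: "\<And>x. x \<in> U \<Longrightarrow> (d - 1) * (v x)\<^sup>2 + (r - v x)\<^sup>2 \<le> (d - 1) * t x"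
    and "x \<in> U"
  shows "d * v x = r + 1 - d"
proof -
  define c where "c = r + 1 - d"
  define slack where "slack x = (d - 1) * t x - (d - 1) * (v x)\<^sup>2 - (r - v x)\<^sup>2" for x
  have pointwise: "(d * v x - c)\<^sup>2 + d * slack x
      = 2 * d * (d - 1) * v x + (c\<^sup>2 - d * r\<^sup>2) + d * (d - 1) * t x" for x
    by (simp add: slack_def c_def power2_eq_square algebra_simps)
  have "(\<Sum>x\<in>U. (d * v x - c)\<^sup>2) + d * (\<Sum>x\<in>U. slack x)
      = (\<Sum>x\<in>U. 2 * d * (d - 1) * v x + (c\<^sup>2 - d * r\<^sup>2) + d * (d - 1) * t x)"
    by (simp add: sum_distrib_left pointwise flip: sum.distrib)
  also have "\<dots> = 2 * d * (d - 1) * (\<Sum>x\<in>U. v x) + int (card U) * (c\<^sup>2 - d * r\<^sup>2)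
        + d * (d - 1) * (\<Sum>x\<in>U. t x)"
    by (simp add: sum.distrib sum_distrib_left)
  also have "\<dots> = (d - 1) * r * (r + 1) * (s * d - (r * r - 1))"
    unfolding sum_v sum_t card_U c_def by (simp add: power2_eq_square algebra_simps)
  also have "\<dots> = 0"
    by (simp add: sd)
  finally have "(\<Sum>x\<in>U. (d * v x - c)\<^sup>2) + d * (\<Sum>x\<in>U. slack x) = 0" .
  moreover have "0 \<le> d * (\<Sum>x\<in>U. slack x)"
    using bound \<open>d \<ge> 0\<close> by (intro mult_nonneg_nonneg sum_nonneg) (fastforce simp: slack_def)+
  moreover have "0 \<le> (\<Sum>x\<in>U. (d * v x - c)\<^sup>2)"
    by (simp add: sum_nonneg)
  ultimately have "(\<Sum>x\<in>U. (d * v x - c)\<^sup>2) = 0"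
    by linarith
  then have "(d * v x - c)\<^sup>2 = 0"
    using \<open>finite U\<close> \<open>x \<in> U\<close> by (simp add: sum_nonneg_eq_0_iff)
  then show ?thesis
    by (simp add: c_def)
qed

lemma moments_outside_sqrt_clique:
  fixes A :: "'a::{field,finite} set"
  assumes card: "CARD('a) = r * r" and "r > 1" and "d dvd CARD('a) - 1"
    and A: "paley_clique d A" "card A = r"
  defines "s \<equiv> int (card (dth_powers d :: 'a set))"
  shows "s * int d = int r * int r - 1"
    and "int (card (UNIV - A)) = int r * int r - int r"
    and "(\<Sum>x\<in>UNIV - A. int (adj_count (dth_powers d) A x)) = int r * s - int r * (int r - 1)"
    and "(\<Sum>x\<in>UNIV - A. int (ratio_count (dth_powers d) A x))
      = int r * (int r * int r - 1 + (int r - 1) * (s - 1)) - int r * (int r - 1)\<^sup>2"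
proof -
  have "1 \<le> r * r"
    using \<open>r > 1\<close> by simp
  have "card (dth_powers d :: 'a set) \<ge> 1"
    using one_in_dth_powers[where 'a='a] by (auto simp: Suc_le_eq card_gt_0_iff)
  then have int_diff: "int (CARD('a) - 1) = int r * int r - 1" "int (r - 1) = int r - 1"
    "int (card (dth_powers d :: 'a set) - 1) = s - 1"
    using card \<open>1 \<le> r * r\<close> \<open>r > 1\<close> by (simp_all add: s_def of_nat_diff)
  have "card (dth_powers d :: 'a set) * d = CARD('a) - 1"
    using dth_powers_eq_roots_of_unity(2)[OF assms(3)] assms(3) by simp
  from arg_cong[where f = int, OF this] show "s * int d = int r * int r - 1"
    unfolding of_nat_mult int_diff s_def .
  show "int (card (UNIV - A)) = int r * int r - int r"
    using card A(2) \<open>r > 1\<close> by (simp add: card_Diff_subset of_nat_diff)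
  from arg_cong[where f = int, OF sum_adj_count_outside_clique[OF A(1)]]
  show "(\<Sum>x\<in>UNIV - A. int (adj_count (dth_powers d) A x)) = int r * s - int r * (int r - 1)"
    unfolding of_nat_add of_nat_mult of_nat_sum A(2) int_diff s_def[symmetric]
    by (simp add: algebra_simps)
  from arg_cong[where f = int, OF sum_ratio_count_outside_clique[OF A(1)]]
  show "(\<Sum>x\<in>UNIV - A. int (ratio_count (dth_powers d) A x))
      = int r * (int r * int r - 1 + (int r - 1) * (s - 1)) - int r * (int r - 1)\<^sup>2"
    unfolding of_nat_add of_nat_mult of_nat_power of_nat_sum A(2) int_diff s_def[symmetric]
    by (simp add: algebra_simps)
qed

lemma paley_clique_card_sqrt_imp_dvd:
  fixes A :: "'a::{field,finite} set"
  assumes card: "CARD('a) = r * r" and "r > 1" and "d dvd CARD('a) - 1"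
    and A: "paley_clique d A" "card A = r"
  shows "d dvd r + 1"
proof -
  define v where "v x = int (adj_count (dth_powers d) A x)" for x :: 'a
  define t where "t x = int (ratio_count (dth_powers d) A x)" for x :: 'a
  note moments = moments_outside_sqrt_clique[OF assms, folded v_def t_def]
  have "card A < CARD('a)"
    using A(2) card \<open>r > 1\<close> by simp
  then obtain x where "x \<notin> A"
    by (metis UNIV_I card_mono finite subsetI leD)
  have "int d * v x = int r + 1 - int d"
  proof (rule moment_bounds_force_constant[OF _ moments(2,1) _ moments(3,4)])
    show "(int d - 1) * (v y)\<^sup>2 + (int r - v y)\<^sup>2 \<le> (int d - 1) * t y" if "y \<in> UNIV - A" for y
      using ratio_count_lower_bound[OF assms(3), of y A] that A(2) by (simp add: v_def t_def)
  qed (use \<open>x \<notin> A\<close> in simp_all)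
  then have "int (r + 1) = int d * (v x + 1)"
    by (simp add: algebra_simps)
  then have "int d dvd int (r + 1)"
    by (rule dvdI)
  then show ?thesis
    by (simp only: int_dvd_int_iff)
qed

theorem theorem1p6:
  fixes p d k :: nat
  assumes "prime p" and "odd p" and "d > 1" and "k \<ge> 1"
    and "card (UNIV :: 'a::{field,finite} set) = p ^ (2 * k)"
    and "[card (UNIV :: 'a set) = 1] (mod (2 * d))"
  shows "(paley_clique_number TYPE('a) d = p ^ k \<longleftrightarrow> d dvd (p ^ k + 1))
         \<and> (\<not> d dvd (p ^ k + 1) \<longrightarrow> paley_clique_number TYPE('a) d \<le> p ^ k - 1)"
proof -
  define r where "r = p ^ k"
  have card: "CARD('a) = r * r"
    using assms(5) by (simp add: r_def mult_2 power_add)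
  have "r > 1"
    using one_less_power[OF prime_gt_1_nat[OF assms(1)], of k] assms(4) by (simp add: r_def)
  have "d dvd CARD('a) - 1"
    using assms(6) \<open>r > 1\<close> card by (simp add: cong_altdef_nat dvd_mult_right[of 2 d])
  have frobenius: "(x - y) ^ r = x ^ r - y ^ r" for x y :: 'a
    unfolding r_def using assms(1,2,5) by (rule power_prime_power_diff)
  have bound: "card C \<le> r" if "paley_clique d C" for C :: "'a set"
  proof -
    have "card C * card C \<le> r * r"
      using paley_clique_card_square_le[OF assms(3) \<open>d dvd _\<close> that] card by simp
    then show ?thesis
      using power_le_imp_le_base[of "card C" 1 r] by (simp add: power2_eq_square)
  qed
  note clique_number = paley_clique_number_eq_iff[of d r, OF bound]
  have "paley_clique_number TYPE('a) d = r \<longleftrightarrow> d dvd r + 1"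
    using clique_number(2) paley_clique_subfield[OF card \<open>r > 1\<close> _ frobenius]
      paley_clique_card_sqrt_imp_dvd[OF card \<open>r > 1\<close> \<open>d dvd _\<close>] by blast
  with clique_number(1) show ?thesis
    unfolding r_def by auto
qed

end
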